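(* Let $p$ be an odd prime, $n\ge1$, $r>t\ge0$ integers and $c\in\mathbb{F}_p^*$. If $f(x)=\mathrm{Tr}_n(cx^{p^r+1}-cx^{p^t+1})$ with $\gcd(n,r+t)=\gcd(n,r-t)=\gcd(n,p)=1$, then the kernel in $\mathbb{F}_{p^n}$ of the linearized polynomial $L(z)=c\big(z+z^{p^{2r}}-z^{p^{r-t}}-z^{p^{r+t}}\big)$ corresponding to $f$ is $\mathbb{F}_p$. If $f(x)=\mathrm{Tr}_n(cx^{p^r+1}+cx^{p^t+1})$ with $\gcd(n,2(r+t))=\gcd(n,2(r-t))=2$, $r-t$ odd and $\gcd(n,p)=1$, then the kernel in $\mathbb{F}_{p^n}$ of the corresponding linearized polynomial $L(z)=c\big(z+z^{p^{2r}}+z^{p^{r-t}}+z^{p^{r+t}}\big)$ is the set of roots of $z^p+z$, all of which lie in $\mathbb{F}_{p^2}$.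
   Context: $\mathrm{Tr}_n$ denotes the absolute trace $\mathbb{F}_{p^n}\to\mathbb{F}_p$. The kernel of $L$ means $\{z\in\mathbb{F}_{p^n}: L(z)=0\}$. *)

theory Defs
  imports Main "HOL-Computational_Algebra.Primes"
begin

definition prime_subfield :: "'a::field set" where
  "prime_subfield = range of_int"

text \<open>The subfield with p^d elements inside a finite field of characteristic p (when d divides n):
  the fixed points of the d-th power of Frobenius.\<close>
definition subfield_pow :: "nat \<Rightarrow> nat \<Rightarrow> 'a::field set" where
  "subfield_pow p d = {x. x ^ (p ^ d) = x}"

end

theory Submission
  imports Defs "HOL-Computational_Algebra.Polynomial" "HOL-Number_Theory.Cong"
    "HOL-Algebra.FiniteProduct"
begin

(* Write phi^k z = z^(p^k) for the powers of Frobenius on a field of characteristic p.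
   If z is in the kernel of z + phi^(a+b) z + s (phi^a z + phi^b z), s = +-1, then
   w = z + s phi^b z satisfies phi^a w = -s w.  Since phi^n = id on F_(p^n), the gcd
   conditions on n turn this into phi w = -s w.  Consequently phi^b acts on z as the
   affine map z |-> -s z + s w whose linear part commutes with the translation, so
   phi^(kb) z = (-s)^k (z - k w); for k = n this forces n w = 0, i.e. w = 0 as p does not
   divide n.  Thus phi^b z = -s z, and the gcd conditions once more give phi z = -s z.
   Finally, phi z = z describes F_p (a root count for X^p - X), and phi z = -z implies
   phi^2 z = z. *)

text \<open>Fermat's little theorem for a finite field given as a type: \<open>x\<^sup>q = x\<close> with \<open>q\<close> the
  number of elements, by Lagrange's theorem for the multiplicative group.\<close>

lemma finite_field_power_card:
  fixes x :: "'a::{field,finite}"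
  shows "x ^ card (UNIV :: 'a set) = x"
proof (cases "x = 0")
  case False
  define G :: "'a monoid" where "G = \<lparr>carrier = UNIV - {0}, mult = (*), one = 1\<rparr>"
  have "comm_group G"
  proof (rule comm_groupI)
    fix y assume "y \<in> carrier G"
    then show "\<exists>z\<in>carrier G. z \<otimes>\<^bsub>G\<^esub> y = \<one>\<^bsub>G\<^esub>"
      by (intro bexI[of _ "inverse y"]) (auto simp: G_def)
  qed (auto simp: G_def mult_ac)
  have pow: "y [^]\<^bsub>G\<^esub> k = y ^ k" for y :: 'a and k :: nat
    by (induction k) (simp_all add: G_def)
  have "x ^ card (UNIV - {0 :: 'a}) = 1"
    using comm_group.power_order_eq_one[OF \<open>comm_group G\<close>, of x] False
    by (simp add: G_def pow[unfolded G_def])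
  moreover have "card (UNIV :: 'a set) = Suc (card (UNIV - {0 :: 'a}))"
    by (simp add: card_Diff_singleton finite_UNIV_card_ge_0)
  ultimately show ?thesis
    by (simp only: power_Suc2 mult.left_neutral)
qed (simp add: finite_UNIV_card_ge_0)

definition frob :: "nat \<Rightarrow> nat \<Rightarrow> 'a::field \<Rightarrow> 'a" where
  "frob p k x = x ^ (p ^ k)"

lemma frob_0 [simp]: "frob p 0 x = x"
  by (simp add: frob_def)

lemma frob_period:
  assumes "card (UNIV :: 'a::{field,finite} set) = p ^ n"
  shows "frob p n (x :: 'a) = x"
  using finite_field_power_card[of x] unfolding assms frob_def .

lemma frob_frob: "frob p a (frob p b x) = frob p (a + b) x"
  by (simp add: frob_def power_add mult.commute flip: power_mult)

lemma frob_mult: "frob p k (x * y) = frob p k x * frob p k y"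
  by (simp add: frob_def power_mult_distrib)

lemma frob_power: "frob p k (x ^ m) = frob p k x ^ m"
  by (simp add: frob_def mult.commute flip: power_mult)

lemma frob_fixed_mult: "frob p a x = x \<Longrightarrow> frob p (m * a) x = x"
  by (induction m) (simp_all add: frob_frob [symmetric])

lemma frob_fixed_gcd:
  assumes "frob p a x = x" and "frob p b x = x"
  shows "frob p (gcd a b) x = x"
  using assms
proof (induction a b rule: gcd_nat_induct)
  case (step a b)
  have "frob p (a mod b) x = frob p (a mod b) (frob p (a div b * b) x)"
    using frob_fixed_mult[OF step.prems(2)] by simp
  also have "\<dots> = x"
    using step.prems(1) by (simp add: frob_frob)
  finally show ?case
    using step by (simp add: gcd_non_0_nat)
qed simp

lemma sign_in_prime_subfield: "s \<in> {1, -1} \<Longrightarrow> (s :: 'a::field) \<in> prime_subfield"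
  unfolding prime_subfield_def by (auto intro: range_eqI[of _ _ 1] range_eqI[of _ _ "- 1"])

context
  fixes p :: nat
  assumes char_p: "CHAR('a::field) = p" and prime_p: "prime p"
begin

lemma of_nat_coprime_char_nonzero:
  assumes "gcd n p = 1"
  shows "of_nat n \<noteq> (0 :: 'a)"
proof
  assume "of_nat n = (0 :: 'a)"
  then have "p dvd gcd n p"
    using char_p by (simp add: of_nat_eq_0_iff_char_dvd)
  then show False
    using assms prime_p by (simp add: prime_nat_iff)
qed

lemma frob_add: "frob p k (x + y) = frob p k x + frob p k (y :: 'a)"
  unfolding frob_def by (rule freshmans_dream') (simp_all add: char_p prime_p)

lemma frob_uminus: "frob p k (- x) = - frob p k (x :: 'a)"
proof -
  have "frob p k x + frob p k (- x) = frob p k 0"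
    by (simp add: frob_add [symmetric])
  also have "\<dots> = 0"
    using prime_gt_0_nat[OF prime_p] by (simp add: frob_def)
  finally show ?thesis
    by (simp add: eq_neg_iff_add_eq_0 add.commute)
qed

lemma frob_of_int: "frob p k (of_int m :: 'a) = of_int m"
proof -
  have of_nat_fixed: "frob p k (of_nat j :: 'a) = of_nat j" for j
  proof (induction j)
    case 0
    show ?case
      using prime_gt_0_nat[OF prime_p] by (simp add: frob_def)
  next
    case (Suc j)
    then show ?case
      by (simp add: frob_add) (simp add: frob_def)
  qed
  have "m = int (nat m) \<or> m = - int (nat (- m))"
    by linarith
  then show ?thesis
  proof
    assume "m = int (nat m)"
    then have "(of_int m :: 'a) = of_nat (nat m)"
      by (metis of_int_of_nat_eq)
    then show ?thesis
      using of_nat_fixed by simp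
  next
    assume "m = - int (nat (- m))"
    then have "(of_int m :: 'a) = - of_nat (nat (- m))"
      by (metis of_int_minus of_int_of_nat_eq)
    then show ?thesis
      using of_nat_fixed frob_uminus by simp
  qed
qed

text \<open>The elements fixed by the Frobenius map form the prime field: they are roots of
  \<open>X\<^sup>p - X\<close>, of which there are at most \<open>p\<close>, and the \<open>p\<close> integers \<open>0, \<dots>, p - 1\<close> are
  distinct roots.\<close>
lemma frob_fixed_iff_prime_subfield: "frob p 1 x = x \<longleftrightarrow> (x :: 'a) \<in> prime_subfield"
proof -
  let ?S = "{x :: 'a. frob p 1 x = x}"
  let ?A = "(of_nat :: nat \<Rightarrow> 'a) ` {..<p}"
  have p_ge_2: "p \<ge> 2"
    using prime_ge_2_nat[OF prime_p] .
  define Q :: "'a poly" where "Q = monom 1 p + [:0, - 1:]"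
  have deg_Q: "degree Q = p"
    using p_ge_2 unfolding Q_def by (subst degree_add_eq_left) (auto simp: degree_monom_eq)
  have roots_Q: "?S = {x. poly Q x = 0}"
    by (auto simp: Q_def poly_monom frob_def)
  have "Q \<noteq> 0"
    using deg_Q p_ge_2 by auto
  then have S_finite: "finite ?S" and S_card: "card ?S \<le> p"
    using poly_roots_finite[of Q] card_poly_roots_bound[of Q] unfolding roots_Q deg_Q by simp_all
  have "inj_on (of_nat :: nat \<Rightarrow> 'a) {..<p}"
    by (auto intro!: inj_onI cong_less_modulus_unique_nat simp: of_nat_eq_iff_cong_CHAR char_p)
  then have A_card: "card ?A = p"
    by (simp add: card_image)
  have A_S: "?A \<subseteq> ?S"
    using frob_of_int[of 1 "int _"] by auto
  have "?S = ?A"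
    using card_seteq[OF S_finite A_S] A_card S_card by simp
  moreover have "?A \<subseteq> prime_subfield"
    by (auto simp: prime_subfield_def intro!: image_eqI[where x = "int _"])
  moreover have "prime_subfield \<subseteq> ?S"
    using frob_of_int[of 1] by (auto simp: prime_subfield_def)
  ultimately show ?thesis
    by blast
qed

lemma frob_prime_subfield: "e \<in> prime_subfield \<Longrightarrow> frob p k (e :: 'a) = e"
  by (auto simp: prime_subfield_def frob_of_int)

lemma frob_eigen_power:
  assumes "e \<in> prime_subfield" and "frob p 1 x = e * (x :: 'a)"
  shows "frob p k x = e ^ k * x"
proof (induction k)
  case (Suc k)
  have "frob p (Suc k) x = frob p 1 (frob p k x)"
    by (simp add: frob_frob)
  then show ?case
    using Suc assms by (simp add: frob_mult frob_power frob_prime_subfield)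
qed simp

lemma frob_affine_iterate:
  assumes e: "e \<in> {1, -1}"
    and z: "frob p a z = e * z + u" and u: "frob p a u = e * (u :: 'a)"
  shows "frob p (k * a) z = e ^ k * (z + of_nat k * e * u)"
proof (induction k)
  case (Suc k)
  have e_fixed: "frob p a e = e" and e_square: "e * e = 1"
    using e sign_in_prime_subfield[OF e] by (auto simp: frob_prime_subfield)
  have "frob p (Suc k * a) z = frob p a (frob p (k * a) z)"
    by (simp add: frob_frob)
  also have "\<dots> = e ^ k * (e * z + u + of_nat k * e * (e * u))"
    using Suc.IH z u e_fixed frob_of_int[of a "int k"]
    by (simp add: frob_add frob_mult frob_power)
  also have "\<dots> = e ^ k * (e * z + (e * e) * u + of_nat k * e * (e * u))"
    by (simp only: e_square mult.left_neutral)
  also have "\<dots> = e ^ Suc k * (z + of_nat (Suc k) * e * u)"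
    by (simp add: algebra_simps)
  finally show ?case .
qed simp

lemma frob_affine_translation_zero:
  assumes e: "e \<in> {1, -1}"
    and z: "frob p a z = e * z + u" and u: "frob p a u = e * (u :: 'a)"
    and period: "frob p (n * a) z = z" and "e ^ n = 1" and "of_nat n \<noteq> (0 :: 'a)"
  shows "u = 0"
proof -
  have "z = z + of_nat n * e * u"
    using frob_affine_iterate[OF e z u, of n] period \<open>e ^ n = 1\<close> by simp
  then have "of_nat n * e * u = 0"
    by simp
  then show ?thesis
    using \<open>of_nat n \<noteq> 0\<close> e by auto
qed

text \<open>If \<open>\<phi>\<^sup>a x = -x\<close> and \<open>\<phi>\<^sup>n x = x\<close> where \<open>gcd n (2a) = 2\<close> and \<open>a\<close> is odd, then already
  \<open>\<phi> x = -x\<close>: \<open>x\<close> is fixed by \<open>\<phi>\<^sup>2\<^sup>a\<close>, hence by \<open>\<phi>\<^sup>2\<close>, and \<open>\<phi>\<^sup>a\<close> agrees with \<open>\<phi>\<close> on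
  \<open>\<phi>\<^sup>2\<close>-fixed elements.\<close>
lemma frob_antifixed_gcd:
  assumes a: "frob p a x = - (x :: 'a)" and n: "frob p n x = x"
    and "gcd n (2 * a) = 2" and "odd a"
  shows "frob p 1 x = - x"
proof -
  have "frob p (2 * a) x = frob p a (frob p a x)"
    by (simp add: frob_frob mult_2)
  then have "frob p (2 * a) x = x"
    using a by (simp add: frob_uminus)
  then have fixed_2: "frob p 2 x = x"
    using frob_fixed_gcd[OF n] \<open>gcd n (2 * a) = 2\<close> by metis
  obtain m where "a = Suc (m * 2)"
    using \<open>odd a\<close> by (metis oddE mult.commute Suc_eq_plus1)
  then have "frob p a x = frob p 1 (frob p (m * 2) x)"
    by (simp add: frob_frob)
  then show ?thesis
    using a frob_fixed_mult[OF fixed_2, of m] by simp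
qed

lemma linearized_kernel_eigenvector:
  assumes s: "s \<in> {1, -1}"
    and kernel: "z + frob p (a + b) z + s * (frob p a z + frob p b z) = (0 :: 'a)"
  shows "frob p a (z + s * frob p b z) = - s * (z + s * frob p b z)"
proof -
  have s_fixed: "frob p a s = s" and s_square: "s * s = 1"
    using s sign_in_prime_subfield[OF s] by (auto simp: frob_prime_subfield)
  have "frob p a (z + s * frob p b z) = frob p a z + s * frob p (a + b) z"
    using s_fixed by (simp add: frob_add frob_mult frob_frob)
  also have "frob p (a + b) z = - z - s * (frob p a z + frob p b z)"
    using kernel by (simp add: eq_neg_iff_add_eq_0 algebra_simps)
  also have "frob p a z + s * (- z - s * (frob p a z + frob p b z))
      = - s * z - (s * s) * frob p b z + (1 - s * s) * frob p a z"
    by (simp add: algebra_simps)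
  also have "\<dots> = - s * z - (s * s) * (s * s) * frob p b z"
    by (simp only: s_square) simp
  also have "\<dots> = - s * (z + s * frob p b z)"
    by (simp add: s_square algebra_simps)
  finally show ?thesis .
qed

text \<open>With \<open>w = z - \<phi>\<^sup>b z\<close> the key identity
  gives \<open>\<phi>\<^sup>a w = w\<close>, so \<open>w \<in> \<bbbF>\<^sub>p\<close>; then \<open>\<phi>\<^sup>b z = z - w\<close> forces \<open>w = 0\<close>, i.e. \<open>\<phi>\<^sup>b z = z\<close>.\<close>
lemma linearized_kernel_difference:
  assumes period: "\<And>x. frob p n x = (x :: 'a)" and "of_nat n \<noteq> (0 :: 'a)"
    and "gcd n a = 1" and "gcd n b = 1"
  shows "z + frob p (a + b) z - frob p a z - frob p b z = 0 \<longleftrightarrow> frob p 1 z = (z :: 'a)"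
proof
  assume kernel: "z + frob p (a + b) z - frob p a z - frob p b z = 0"
  define w where "w = z - frob p b z"
  have "z + frob p (a + b) z + (- 1) * (frob p a z + frob p b z) = 0"
    using kernel by (simp add: algebra_simps)
  from linearized_kernel_eigenvector[OF _ this] have "frob p a w = w"
    by (simp add: w_def)
  then have "frob p 1 w = w"
    using frob_fixed_gcd[OF period] \<open>gcd n a = 1\<close> by metis
  then have "frob p b (- w) = - w"
    using frob_eigen_power[of 1 w b] sign_in_prime_subfield[of 1] by (simp add: frob_uminus)
  then have "- w = 0"
    using frob_affine_translation_zero[of 1 b z "- w" n] frob_fixed_mult[OF period, of b] \<open>of_nat n \<noteq> 0\<close>
    by (simp add: w_def mult.commute)
  then have "frob p b z = z"
    by (simp add: w_def)
  then show "frob p 1 z = z"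
    using frob_fixed_gcd[OF period] \<open>gcd n b = 1\<close> by metis
next
  assume "frob p 1 z = z"
  then have "frob p k z = z" for k
    using frob_eigen_power[of 1 z k] sign_in_prime_subfield[of 1] by simp
  then show "z + frob p (a + b) z - frob p a z - frob p b z = 0"
    by simp
qed

text \<open>The argument is that of the difference case with all eigenvalues \<open>1\<close> replaced by \<open>-1\<close>.\<close>
lemma linearized_kernel_sum:
  assumes period: "\<And>x. frob p n x = (x :: 'a)" and "of_nat n \<noteq> (0 :: 'a)"
    and gcd_a: "gcd n (2 * a) = 2" and gcd_b: "gcd n (2 * b) = 2" and "odd a" and "odd b"
  shows "z + frob p (a + b) z + frob p a z + frob p b z = 0 \<longleftrightarrow> frob p 1 z = - (z :: 'a)"
proof
  assume kernel: "z + frob p (a + b) z + frob p a z + frob p b z = 0"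
  define w where "w = z + frob p b z"
  have "z + frob p (a + b) z + 1 * (frob p a z + frob p b z) = 0"
    using kernel by (simp add: add.assoc)
  from linearized_kernel_eigenvector[OF _ this] have "frob p a w = - w"
    by (simp add: w_def)
  then have "frob p 1 w = - w"
    using frob_antifixed_gcd[OF _ period gcd_a \<open>odd a\<close>] by blast
  then have "frob p b w = - w"
    using frob_eigen_power[of "- 1" w b] sign_in_prime_subfield[of "- 1"] \<open>odd b\<close> by simp
  moreover have "even n"
    using gcd_dvd1[of n "2 * a"] gcd_a by simp
  ultimately have "w = 0"
    using frob_affine_translation_zero[of "- 1" b z w n] frob_fixed_mult[OF period, of b] \<open>of_nat n \<noteq> 0\<close>
    by (simp add: w_def mult.commute)
  then have "frob p b z = - z"
    by (simp add: w_def eq_neg_iff_add_eq_0 add.commute)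
  then show "frob p 1 z = - z"
    using frob_antifixed_gcd[OF _ period gcd_b \<open>odd b\<close>] by blast
next
  assume "frob p 1 z = - z"
  then have "frob p k z = (- 1) ^ k * z" for k
    using frob_eigen_power[of "- 1" z k] sign_in_prime_subfield[of "- 1"] by simp
  then show "z + frob p (a + b) z + frob p a z + frob p b z = 0"
    using \<open>odd a\<close> \<open>odd b\<close> by simp
qed

end

theorem mainTheorem5:
  fixes p n r t :: nat and c :: "'a::{field,finite}"
  assumes "prime p" and "odd p" and "n \<ge> 1"
    and "CHAR('a) = p" and "card (UNIV :: 'a set) = p ^ n"
    and "t < r"
    and "c \<in> prime_subfield" and "c \<noteq> 0"
  shows
    "(gcd n (r + t) = 1 \<and> gcd n (r - t) = 1 \<and> gcd n p = 1 \<longrightarrow>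
       {z :: 'a. c * (z + z ^ (p ^ (2 * r)) - z ^ (p ^ (r - t)) - z ^ (p ^ (r + t))) = 0}
         = prime_subfield)
   \<and> (gcd n (2 * (r + t)) = 2 \<and> gcd n (2 * (r - t)) = 2 \<and> odd (r - t) \<and> gcd n p = 1 \<longrightarrow>
       {z :: 'a. c * (z + z ^ (p ^ (2 * r)) + z ^ (p ^ (r - t)) + z ^ (p ^ (r + t))) = 0}
         = {z. z ^ p + z = 0}
       \<and> {z :: 'a. z ^ p + z = 0} \<subseteq> subfield_pow p 2)"
proof -
  note char = assms(4) assms(1)
  note period = frob_period[OF assms(5)]
  note n_unit = of_nat_coprime_char_nonzero[OF char]
  have exponents: "2 * r = (r - t) + (r + t)"
    using assms(6) by simp
  have odd_sum: "odd (r + t)" if "odd (r - t)"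
    using that assms(6) by (metis add.commute le_add_diff_inverse2 less_imp_le odd_add even_add)
  have antifixed: "z ^ p + z = 0 \<longleftrightarrow> frob p 1 z = - 1 * z" for z :: 'a
    by (simp add: frob_def eq_neg_iff_add_eq_0)
  show ?thesis
  proof (intro conjI impI subsetI)
    assume "gcd n (r + t) = 1 \<and> gcd n (r - t) = 1 \<and> gcd n p = 1"
    then have "c * (z + z ^ (p ^ (2 * r)) - z ^ (p ^ (r - t)) - z ^ (p ^ (r + t))) = 0
        \<longleftrightarrow> z \<in> prime_subfield" for z :: 'a
      using linearized_kernel_difference[OF char period n_unit, of "r - t" "r + t" z]
        frob_fixed_iff_prime_subfield[OF char, of z] \<open>c \<noteq> 0\<close>
      by (simp add: frob_def flip: exponents)
    then show "{z :: 'a. c * (z + z ^ (p ^ (2 * r)) - z ^ (p ^ (r - t)) - z ^ (p ^ (r + t))) = 0}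
        = prime_subfield"
      by blast
  next
    assume "gcd n (2 * (r + t)) = 2 \<and> gcd n (2 * (r - t)) = 2 \<and> odd (r - t) \<and> gcd n p = 1"
    then have "c * (z + z ^ (p ^ (2 * r)) + z ^ (p ^ (r - t)) + z ^ (p ^ (r + t))) = 0
        \<longleftrightarrow> z ^ p + z = 0" for z :: 'a
      using linearized_kernel_sum[OF char period n_unit, of "r - t" "r + t" z]
        antifixed[of z] odd_sum \<open>c \<noteq> 0\<close>
      by (simp add: frob_def flip: exponents)
    then show "{z :: 'a. c * (z + z ^ (p ^ (2 * r)) + z ^ (p ^ (r - t)) + z ^ (p ^ (r + t))) = 0}
        = {z. z ^ p + z = 0}"
      by blast
  next
    fix z :: 'a
    assume "z \<in> {z. z ^ p + z = 0}"
    then have "frob p 2 z = z"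
      using frob_eigen_power[OF char sign_in_prime_subfield[of "- 1"], of z 2] antifixed by simp
    then show "z \<in> subfield_pow p 2"
      by (simp add: subfield_pow_def frob_def)
  qed
qed

end
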